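(* Let $z_1,z_2,z_3,z_4\in\mathbb{C}$ be the vertices of a convex quadrilateral, labelled in cyclic order around its boundary. For $j\neq k$ put $z_{jk}=z_k-z_j$, $r_{jk}=|z_{jk}|$, and let $At=At(z_1,z_2,z_3,z_4)$ be the (planar) Atiyah determinant of these points. Let the angles $\alpha_j,\beta_j,\gamma_j$ ($j=1,\dots,4$, indices mod $4$) be $$\alpha_j=\angle z_{j+1}z_jz_{j+2},\qquad \beta_j=\angle z_{j+2}z_jz_{j-1},\qquad \gamma_j=\angle z_{j-1}z_jz_{j+1}.$$ Define $$S_1=\sum_{j=1}^4(\cos\alpha_j+\cos\beta_j+\cos\gamma_j),\qquad S_2=\sum_{j=1}^4(\cos\alpha_j+\cos\beta_j+\cos\gamma_j)(\cos\alpha_{j+1}+\cos\gamma_{j+2}+\cos\beta_{j+3}),$$ and $$E=2\sum_{j=1}^4\Big(\sin\alpha_j\sin\alpha_{j+1}+\sin\beta_j\sin\beta_{j+1}-\sin\gamma_j\sin\alpha_{j+1}-\sin\gamma_{j+1}\sin\beta_j+\sin\gamma_j\sin\alpha_{j+2}+\sin\gamma_j\sin\beta_{j+2}\Big)$$ $$\qquad-4\sum_{j=1}^4\sin\alpha_{j+1}\sin\beta_j+4\sin\gamma_1\sin\gamma_3+4\sin\gamma_2\sin\gamma_4 .$$ Then $$At=r_{12}r_{13}r_{14}r_{23}r_{24}r_{34}\,\big(24+8S_1+2S_2+E\big).$$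
   Context: Planar Atiyah determinant: identify the plane containing the points with $\{0\}\times\mathbb{C}\subset\mathbb{R}\times\mathbb{C}=\mathbb{R}^3$. For distinct $z_1,\dots,z_4\in\mathbb{C}$ and $j\ne k$ let $z_{jk}=z_k-z_j$, $r_{jk}=|z_{jk}|$, $u_{jk}=z_{jk}/r_{jk}$. For an "observer" $k$ and another point $j\neq k$ define the vector $w_{kj}=(x_{kj},y_{kj})\in\mathbb{C}^2$ (a Hopf lift of $z_{kj}$) by $w_{kj}=\sqrt{r_{kj}}\,(1,\overline{u}_{kj})$ if $k<j$ and $w_{kj}=\sqrt{r_{kj}}\,(u_{kj},1)$ if $k>j$. Let $C_k\in\mathbb{C}^4$ be the vector of coefficients of $1,t,t^2,t^3$ in the polynomial $\prod_{j\neq k}(x_{kj}+y_{kj}t)$ (the symmetric tensor product of the three vectors $w_{kj}$). The Atiyah determinant $At(z_1,\dots,z_4)$ is the determinant of the $4\times4$ matrix whose $k$-th column is $C_k$; it is a real number for planar points. Angles $\angle XYZ\in[0,\pi]$ denote the usual unsigned angle at $Y$. *)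

theory Defs
  imports "Jordan_Normal_Form.Determinant" "HOL-Computational_Algebra.Polynomial"
begin

definition uangle :: "complex \<Rightarrow> complex \<Rightarrow> complex \<Rightarrow> real" where
  "uangle x y z = arccos (Re (cnj (x - y) * (z - y)) / (cmod (x - y) * cmod (z - y)))"

text \<open>Points indexed 0..3 (paper's 1..4).  z_kj = z_j - z_k, r_kj = |z_kj|, u_kj = z_kj / r_kj.
  Hopf lift w_kj = (x_kj, y_kj).\<close>
definition hopf_x :: "(nat \<Rightarrow> complex) \<Rightarrow> nat \<Rightarrow> nat \<Rightarrow> complex" where
  "hopf_x p k j = (let zz = p j - p k; r = cmod zz; u = zz / complex_of_real r in
     if k < j then complex_of_real (sqrt r) else complex_of_real (sqrt r) * u)"

definition hopf_y :: "(nat \<Rightarrow> complex) \<Rightarrow> nat \<Rightarrow> nat \<Rightarrow> complex" where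
  "hopf_y p k j = (let zz = p j - p k; r = cmod zz; u = zz / complex_of_real r in
     if k < j then complex_of_real (sqrt r) * cnj u else complex_of_real (sqrt r))"

definition atiyah_poly :: "(nat \<Rightarrow> complex) \<Rightarrow> nat \<Rightarrow> complex poly" where
  "atiyah_poly p k = (\<Prod>j\<in>{0..<4} - {k}. [:hopf_x p k j, hopf_y p k j:])"

text \<open>Atiyah determinant: 4x4 matrix whose k-th column is C_k, i.e. entry (i,k) = coefficient of t^i.\<close>
definition Atiyah :: "complex \<Rightarrow> complex \<Rightarrow> complex \<Rightarrow> complex \<Rightarrow> complex" where
  "Atiyah z1 z2 z3 z4 = (let p = (\<lambda>i. [z1, z2, z3, z4] ! i) in
     det (mat 4 4 (\<lambda>(i, k). coeff (atiyah_poly p k) i)))"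

definition cross3 :: "complex \<Rightarrow> complex \<Rightarrow> complex \<Rightarrow> real" where
  "cross3 a b c = Im (cnj (b - a) * (c - a))"

text \<open>Vertex j (integer, taken mod 4, paper's labels 1..4).\<close>
definition vtx :: "complex \<Rightarrow> complex \<Rightarrow> complex \<Rightarrow> complex \<Rightarrow> int \<Rightarrow> complex" where
  "vtx z1 z2 z3 z4 j = [z1, z2, z3, z4] ! nat ((j - 1) mod 4)"

text \<open>z1 z2 z3 z4 are the vertices of a (nondegenerate) convex quadrilateral in this cyclic order:
  for every side z_j z_{j+1}, the two other vertices lie strictly on the same side of its line,
  and this side is the same for all sides (consistent orientation).\<close>
definition convex_quad :: "complex \<Rightarrow> complex \<Rightarrow> complex \<Rightarrow> complex \<Rightarrow> bool" where
  "convex_quad z1 z2 z3 z4 \<longleftrightarrow>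
     (let v = vtx z1 z2 z3 z4 in
       (\<forall>j\<in>{1..4}. cross3 (v j) (v (j+1)) (v (j+2)) > 0 \<and> cross3 (v j) (v (j+1)) (v (j+3)) > 0) \<or>
       (\<forall>j\<in>{1..4}. cross3 (v j) (v (j+1)) (v (j+2)) < 0 \<and> cross3 (v j) (v (j+1)) (v (j+3)) < 0))"

end

theory Submission
  imports Defs
begin

(* Each Hopf lift w_kj is sqrt r_kj times (1, conj u_kj) or (u_kj, 1), where u_kj = sgn (z_j - z_k)
   is a unit complex number.  Pulling these scalars out of the columns leaves every sqrt r_jk
   twice, i.e. the product of the six distances, times the determinant of the normalised lifts:
   a polynomial in the six directions u_jk (j < k) and their conjugates, which are their inverses.
   At a vertex z_j, the rotation taking the direction of z_a - z_j to that of z_b - z_j is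
   cos theta + i t sin theta, where t = 1 or -1 is the orientation of the triangle z_j z_a z_b;
   convexity makes t the same for all twelve angles, and it drops out because the sines enter
   quadratically.  The theorem thus becomes a polynomial identity in the u_jk modulo
   u_jk * conj u_jk = 1, which Groebner bases verify. *)

section \<open>Angles as rotations\<close>

lemma sgn_eq_Complex_cos_sin_arccos:
  fixes w :: complex
  assumes "w \<noteq> 0"
  defines "\<theta> \<equiv> arccos (Re w / cmod w)"
  shows "sgn w = Complex (cos \<theta>) (sgn (Im w) * sin \<theta>)"
proof -
  have m: "cmod w > 0" using assms by simp
  have bound: "\<bar>Re w / cmod w\<bar> \<le> 1"
    using abs_Re_le_cmod[of w] m by (simp add: abs_divide)
  have "sin \<theta> = sqrt (1 - (Re w / cmod w)\<^sup>2)"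
    using bound by (simp add: \<theta>_def sin_arccos_abs)
  also have "1 - (Re w / cmod w)\<^sup>2 = (Im w / cmod w)\<^sup>2"
    using m by (simp add: field_simps) (simp add: cmod_power2)
  finally have "sin \<theta> = \<bar>Im w\<bar> / cmod w"
    using m by simp
  then show ?thesis
    using bound
    by (simp add: \<theta>_def cos_arccos_abs complex_eq_iff mult.assoc[symmetric] sgn_mult_abs)
qed

lemma sgn_mult_cnj_sgn_eq_uangle:
  assumes "x \<noteq> y" "z \<noteq> y"
  shows "sgn (z - y) * cnj (sgn (x - y)) =
    Complex (cos (uangle x y z)) (sgn (cross3 y x z) * sin (uangle x y z))"
proof -
  define w where "w = cnj (x - y) * (z - y)"
  have "w \<noteq> 0" using assms by (simp add: w_def)
  moreover have "sgn (z - y) * cnj (sgn (x - y)) = sgn w"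
    by (simp add: w_def sgn_mult sgn_eq norm_mult ac_simps del: complex_cnj_diff)
  moreover have "uangle x y z = arccos (Re w / cmod w)"
    by (simp add: uangle_def w_def norm_mult del: complex_cnj_diff)
  moreover have "Im w = cross3 y x z"
    by (simp add: w_def cross3_def)
  ultimately show ?thesis
    using sgn_eq_Complex_cos_sin_arccos by metis
qed

lemma uangle_commute: "uangle x y z = uangle z y x"
  unfolding uangle_def by (simp add: algebra_simps)

section \<open>Convex quadrilaterals\<close>

lemma cross3_rotate: "cross3 a b c = cross3 b c a"
  unfolding cross3_def by (simp add: algebra_simps)

lemma cross3_nonzero_imp_distinct: "cross3 a b c \<noteq> 0 \<Longrightarrow> distinct [a, b, c]"
  unfolding cross3_def by (auto simp: algebra_simps)

lemma vtx_mod: "vtx z1 z2 z3 z4 (j + c) = vtx z1 z2 z3 z4 ((j - 1) mod 4 + 1 + c)"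
  by (simp add: vtx_def mod_simps diff_add_eq)

lemma vtx_add_4: "vtx z1 z2 z3 z4 (j + 4) = vtx z1 z2 z3 z4 j"
  using vtx_mod[of z1 z2 z3 z4 j 4] vtx_mod[of z1 z2 z3 z4 j 0] by (simp add: vtx_def mod_simps)

lemma convex_quad_orientation:
  fixes z1 z2 z3 z4 :: complex
  defines "v \<equiv> vtx z1 z2 z3 z4"
  assumes "convex_quad z1 z2 z3 z4"
  obtains t :: real where "t = 1 \<or> t = -1"
    and "\<And>j a b. (a, b) \<in> {(1, 2), (1, 3), (2, 3)} \<Longrightarrow>
      sgn (cross3 (v j) (v (j + a)) (v (j + b))) = t"
proof -
  obtain t :: real where t: "t = 1 \<or> t = -1"
    and side: "\<And>j. j \<in> {1..4} \<Longrightarrow> sgn (cross3 (v j) (v (j + 1)) (v (j + 2))) = t \<and>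
      sgn (cross3 (v j) (v (j + 1)) (v (j + 3))) = t"
    using assms(2) unfolding convex_quad_def v_def Let_def
    by (metis (no_types, lifting) sgn_neg sgn_pos)
  have side_all: "sgn (cross3 (v j) (v (j + 1)) (v (j + 2))) = t \<and>
      sgn (cross3 (v j) (v (j + 1)) (v (j + 3))) = t" for j
  proof -
    let ?j = "(j - 1) mod 4 + 1"
    have "?j \<in> {1..4}" by simp
    moreover have "v (j + c) = v (?j + c)" for c
      unfolding v_def by (rule vtx_mod)
    ultimately show ?thesis
      using side[of ?j] vtx_mod[of z1 z2 z3 z4 j 0] by (simp add: v_def)
  qed
  show thesis
  proof (rule that[OF t])
    fix j a b :: int
    assume "(a, b) \<in> {(1, 2), (1, 3), (2, 3)}"
    then consider "a = 1" "b = 2" | "a = 1" "b = 3" | "a = 2" "b = 3"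
      by auto
    then show "sgn (cross3 (v j) (v (j + a)) (v (j + b))) = t"
    proof cases
      case 3
      have "v (j + 2 + 2) = v j"
        using vtx_add_4 by (simp add: v_def add.assoc)
      then have "cross3 (v j) (v (j + 2)) (v (j + 3)) =
          cross3 (v (j + 2)) (v (j + 2 + 1)) (v (j + 2 + 2))"
        using cross3_rotate by (simp add: add.assoc)
      with 3 show ?thesis
        using side_all[of "j + 2"] by simp
    qed (use side_all in simp_all)
  qed
qed

lemma convex_quad_distinct:
  assumes "convex_quad z1 z2 z3 z4"
  shows "distinct [z1, z2, z3, z4]"
proof -
  define v where "v = vtx z1 z2 z3 z4"
  obtain t :: real where t: "t = 1 \<or> t = -1" and orient: "\<And>j a b. (a, b) \<in> {(1, 2), (1, 3), (2, 3)} \<Longrightarrow>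
      sgn (cross3 (v j) (v (j + a)) (v (j + b))) = t"
    using convex_quad_orientation[OF assms] unfolding v_def by blast
  have "cross3 (v j) (v (j + 1)) (v (j + 2)) \<noteq> 0" for j
    using orient[of 1 2 j] t by auto
  from this[of 1] this[of 2] this[of 3] show ?thesis
    by (auto simp: v_def vtx_def dest: cross3_nonzero_imp_distinct)
qed

lemma convex_quad_rotations:
  fixes z1 z2 z3 z4 :: complex
  defines "v \<equiv> vtx z1 z2 z3 z4"
  assumes "convex_quad z1 z2 z3 z4"
  obtains t :: real where "t * t = 1"
    and "\<And>j a b. (a, b) \<in> {(1, 2), (1, 3), (2, 3)} \<Longrightarrow>
      sgn (v (j + b) - v j) * cnj (sgn (v (j + a) - v j)) =
      Complex (cos (uangle (v (j + a)) (v j) (v (j + b))))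
        (t * sin (uangle (v (j + a)) (v j) (v (j + b))))"
proof -
  obtain t where t: "t = 1 \<or> t = -1"
    and orient: "\<And>j a b. (a, b) \<in> {(1, 2), (1, 3), (2, 3)} \<Longrightarrow>
      sgn (cross3 (v j) (v (j + a)) (v (j + b))) = t"
    using convex_quad_orientation[OF assms(2)] unfolding v_def by blast
  show thesis
  proof (rule that)
    show "t * t = 1" using t by auto
    fix j a b :: int
    assume ab: "(a, b) \<in> {(1, 2), (1, 3), (2, 3)}"
    have "sgn (cross3 (v j) (v (j + a)) (v (j + b))) \<noteq> 0"
      using orient[OF ab] t by auto
    then have "cross3 (v j) (v (j + a)) (v (j + b)) \<noteq> 0"
      by auto
    then have "v (j + a) \<noteq> v j" "v (j + b) \<noteq> v j"
      by (auto dest: cross3_nonzero_imp_distinct)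
    then show "sgn (v (j + b) - v j) * cnj (sgn (v (j + a) - v j)) =
      Complex (cos (uangle (v (j + a)) (v j) (v (j + b))))
        (t * sin (uangle (v (j + a)) (v j) (v (j + b))))"
      using sgn_mult_cnj_sgn_eq_uangle orient[OF ab] by metis
  qed
qed

lemma det_mat_Leibniz:
  "det (mat n n F) = (\<Sum>p | p permutes {0..<n}. signof p * (\<Prod>i = 0..<n. F (i, p i)))"
proof -
  have "p i < n" if "p permutes {0..<n}" "i < n" for p i
    using permutes_in_image[OF that(1)] that(2) by simp
  then show ?thesis
    by (auto simp: det_def'[of _ n] intro!: sum.cong prod.cong)
qed

lemma det_mat_mult_cols:
  fixes F :: "nat \<times> nat \<Rightarrow> 'a::comm_ring_1"
  shows "det (mat n n (\<lambda>(i, k). c k * F (i, k))) = prod c {0..<n} * det (mat n n F)"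
proof -
  have "signof p * (\<Prod>i = 0..<n. c (p i) * F (i, p i)) =
      prod c {0..<n} * (signof p * (\<Prod>i = 0..<n. F (i, p i)))"
    if "p permutes {0..<n}" for p
    using prod.permute[OF that, of c] by (simp add: prod.distrib comp_def)
  then show ?thesis
    by (simp add: det_mat_Leibniz sum_distrib_left)
qed

lemma det_mat_Suc:
  fixes f :: "nat \<times> nat \<Rightarrow> 'a::comm_ring_1"
  shows "det (mat (Suc n) (Suc n) f) = (\<Sum>j<Suc n. (-1)^j * f (0, j) *
      det (mat n n (\<lambda>(i, k). f (Suc i, if k < j then k else Suc k))))"
proof -
  have "det (mat (Suc n) (Suc n) f) =
      (\<Sum>j<Suc n. mat (Suc n) (Suc n) f $$ (0, j) * cofactor (mat (Suc n) (Suc n) f) 0 j)"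
    by (rule laplace_expansion_row) auto
  also have "\<dots> = (\<Sum>j<Suc n. (-1)^j * f (0, j) *
      det (mat n n (\<lambda>(i, k). f (Suc i, if k < j then k else Suc k))))"
  proof (rule sum.cong[OF refl])
    fix j assume "j \<in> {..<Suc n}"
    then have "mat_delete (mat (Suc n) (Suc n) f) 0 j =
        mat n n (\<lambda>(i, k). f (Suc i, if k < j then k else Suc k))"
      by (intro eq_matI) (auto simp: mat_delete_def)
    with \<open>j \<in> {..<Suc n}\<close>
    show "mat (Suc n) (Suc n) f $$ (0, j) * cofactor (mat (Suc n) (Suc n) f) 0 j =
        (-1)^j * f (0, j) * det (mat n n (\<lambda>(i, k). f (Suc i, if k < j then k else Suc k)))"
      by (simp add: cofactor_def)
  qed
  finally show ?thesis .
qed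

lemma det_mat_4:
  fixes F :: "nat \<times> nat \<Rightarrow> 'a::comm_ring_1"
  defines "a \<equiv> \<lambda>i k. F (i, k)"
  shows "det (mat 4 4 F) =
      a 0 0 * a 1 1 * a 2 2 * a 3 3 - a 0 0 * a 1 1 * a 2 3 * a 3 2 - a 0 0 * a 1 2 * a 2 1 * a 3 3
    + a 0 0 * a 1 2 * a 2 3 * a 3 1 + a 0 0 * a 1 3 * a 2 1 * a 3 2 - a 0 0 * a 1 3 * a 2 2 * a 3 1
    - a 0 1 * a 1 0 * a 2 2 * a 3 3 + a 0 1 * a 1 0 * a 2 3 * a 3 2 + a 0 1 * a 1 2 * a 2 0 * a 3 3
    - a 0 1 * a 1 2 * a 2 3 * a 3 0 - a 0 1 * a 1 3 * a 2 0 * a 3 2 + a 0 1 * a 1 3 * a 2 2 * a 3 0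
    + a 0 2 * a 1 0 * a 2 1 * a 3 3 - a 0 2 * a 1 0 * a 2 3 * a 3 1 - a 0 2 * a 1 1 * a 2 0 * a 3 3
    + a 0 2 * a 1 1 * a 2 3 * a 3 0 + a 0 2 * a 1 3 * a 2 0 * a 3 1 - a 0 2 * a 1 3 * a 2 1 * a 3 0
    - a 0 3 * a 1 0 * a 2 1 * a 3 2 + a 0 3 * a 1 0 * a 2 2 * a 3 1 + a 0 3 * a 1 1 * a 2 0 * a 3 2
    - a 0 3 * a 1 1 * a 2 2 * a 3 0 - a 0 3 * a 1 2 * a 2 0 * a 3 1 + a 0 3 * a 1 2 * a 2 1 * a 3 0"
proof -
  have "(4::nat) = Suc (Suc (Suc (Suc 0)))" by simp
  then show ?thesis
    unfolding a_def by (simp add: det_mat_Suc lessThan_Suc eval_nat_numeral) (simp add: algebra_simps)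
qed

section \<open>Factoring the distances out of the Atiyah determinant\<close>

definition unit_hopf_poly :: "(nat \<Rightarrow> complex) \<Rightarrow> nat \<Rightarrow> nat \<Rightarrow> complex poly" where
  "unit_hopf_poly p k j =
    (if k < j then [:1, cnj (sgn (p j - p k)):] else [:sgn (p j - p k), 1:])"

definition unit_hopf_det :: "complex \<Rightarrow> complex \<Rightarrow> complex \<Rightarrow> complex \<Rightarrow> complex" where
  "unit_hopf_det z1 z2 z3 z4 = (let p = (\<lambda>i. [z1, z2, z3, z4] ! i) in
     det (mat 4 4 (\<lambda>(i, k). coeff (\<Prod>j\<in>{0..<4} - {k}. unit_hopf_poly p k j) i)))"

lemma hopf_lift_eq_smult:
  "[:hopf_x p k j, hopf_y p k j:] =
    smult (of_real (sqrt (cmod (p j - p k)))) (unit_hopf_poly p k j)"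
  by (simp add: hopf_x_def hopf_y_def unit_hopf_poly_def sgn_eq Let_def)

lemma atiyah_poly_eq_smult:
  "atiyah_poly p k = smult (of_real (\<Prod>j\<in>{0..<4} - {k}. sqrt (cmod (p j - p k))))
     (\<Prod>j\<in>{0..<4} - {k}. unit_hopf_poly p k j)"
  by (simp add: atiyah_poly_def hopf_lift_eq_smult prod_smult)

lemma atLeast0LessThan_4: "{0..<4::nat} = {0, 1, 2, 3}"
  by auto

lemma prod_off_diagonal_4:
  fixes g :: "nat \<Rightarrow> nat \<Rightarrow> 'a::comm_ring_1"
  assumes "\<And>j k. g j k = g k j"
  shows "(\<Prod>k\<in>{0..<4}. \<Prod>j\<in>{0..<4} - {k}. g j k) =
    (g 1 0 * g 2 0 * g 3 0 * g 2 1 * g 3 1 * g 3 2)\<^sup>2"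
  using assms[of 0 1] assms[of 0 2] assms[of 0 3] assms[of 1 2] assms[of 1 3] assms[of 2 3]
  by (simp add: atLeast0LessThan_4 insert_Diff_if power2_eq_square ac_simps)

lemma prod_sqrt_dist_4:
  fixes p :: "nat \<Rightarrow> complex"
  shows "(\<Prod>k\<in>{0..<4}. \<Prod>j\<in>{0..<4} - {k}. sqrt (cmod (p j - p k))) =
    cmod (p 1 - p 0) * cmod (p 2 - p 0) * cmod (p 3 - p 0) *
    cmod (p 2 - p 1) * cmod (p 3 - p 1) * cmod (p 3 - p 2)"
  by (subst prod_off_diagonal_4) (simp_all add: norm_minus_commute power_mult_distrib)

lemma Atiyah_eq_mult_unit_hopf_det:
  "Atiyah z1 z2 z3 z4 =
    of_real (cmod (z2 - z1) * cmod (z3 - z1) * cmod (z4 - z1) *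
      cmod (z3 - z2) * cmod (z4 - z2) * cmod (z4 - z3)) * unit_hopf_det z1 z2 z3 z4"
proof -
  define p where "p i = [z1, z2, z3, z4] ! i" for i
  define c where "c k = complex_of_real (\<Prod>j\<in>{0..<4} - {k}. sqrt (cmod (p j - p k)))" for k
  define F where "F = (\<lambda>(i, k). coeff (\<Prod>j\<in>{0..<4} - {k}. unit_hopf_poly p k j) i)"
  have "Atiyah z1 z2 z3 z4 = det (mat 4 4 (\<lambda>(i, k). c k * F (i, k)))"
    by (simp add: Atiyah_def p_def[abs_def, symmetric] atiyah_poly_eq_smult c_def F_def)
  also have "\<dots> = prod c {0..<4} * det (mat 4 4 F)"
    by (rule det_mat_mult_cols)
  also have "prod c {0..<4} = of_real (cmod (z2 - z1) * cmod (z3 - z1) * cmod (z4 - z1) *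
      cmod (z3 - z2) * cmod (z4 - z2) * cmod (z4 - z3))"
    unfolding c_def of_real_prod[symmetric] prod_sqrt_dist_4 by (simp add: p_def)
  also have "det (mat 4 4 F) = unit_hopf_det z1 z2 z3 z4"
    by (simp add: unit_hopf_det_def F_def p_def[abs_def])
  finally show ?thesis .
qed

section \<open>The determinant of the normalised lifts\<close>

text \<open>\<open>ca, cb, cg, sa, sb, sg\<close> stand for the cosines and sines of \<open>\<alpha>, \<beta>, \<gamma>\<close>, so that
  \<open>atiyah_angle_sum\<close> is \<open>24 + 8 S1 + 2 S2 + E\<close>.\<close>
definition atiyah_angle_sum ::
    "(int \<Rightarrow> 'a::comm_ring_1) \<Rightarrow> (int \<Rightarrow> 'a) \<Rightarrow> (int \<Rightarrow> 'a) \<Rightarrow>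
     (int \<Rightarrow> 'a) \<Rightarrow> (int \<Rightarrow> 'a) \<Rightarrow> (int \<Rightarrow> 'a) \<Rightarrow> 'a"
  where "atiyah_angle_sum ca cb cg sa sb sg =
    24 + 8 * (\<Sum>j=1..4. ca j + cb j + cg j)
    + 2 * (\<Sum>j=1..4. (ca j + cb j + cg j) * (ca (j+1) + cg (j+2) + cb (j+3)))
    + (2 * (\<Sum>j=1..4. sa j * sa (j+1) + sb j * sb (j+1)
                   - sg j * sa (j+1) - sg (j+1) * sb j
                   + sg j * sa (j+2) + sg j * sb (j+2))
       - 4 * (\<Sum>j=1..4. sa (j+1) * sb j)
       + 4 * sg 1 * sg 3 + 4 * sg 2 * sg 4)"

lemma of_real_atiyah_angle_sum:
  "of_real (atiyah_angle_sum ca cb cg sa sb sg) =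
    atiyah_angle_sum (\<lambda>j. of_real (ca j)) (\<lambda>j. of_real (cb j)) (\<lambda>j. of_real (cg j))
      (\<lambda>j. of_real (sa j)) (\<lambda>j. of_real (sb j)) (\<lambda>j. of_real (sg j))"
  by (simp add: atiyah_angle_sum_def)

lemma atiyah_angle_sum_scale_sines:
  fixes t :: "'a::comm_ring_1"
  assumes "t * t = 1"
  shows "atiyah_angle_sum ca cb cg (\<lambda>j. t * sa j) (\<lambda>j. t * sb j) (\<lambda>j. t * sg j) =
    atiyah_angle_sum ca cb cg sa sb sg"
proof -
  have "t * x * (t * y) = x * y" for x y
    using assms by (metis mult.assoc mult.commute mult.left_commute mult_1)
  then show ?thesis
    by (simp add: atiyah_angle_sum_def mult.assoc)
qed

lemma coeff_linear_prod3:
  fixes a1 b1 a2 b2 a3 b3 :: "'a::comm_ring_1"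
  defines "P \<equiv> [:a1, b1:] * ([:a2, b2:] * [:a3, b3:])"
  shows "coeff P 0 = a1 * a2 * a3"
    and "coeff P 1 = b1 * a2 * a3 + a1 * b2 * a3 + a1 * a2 * b3"
    and "coeff P 2 = a1 * b2 * b3 + b1 * a2 * b3 + b1 * b2 * a3"
    and "coeff P 3 = b1 * b2 * b3"
  by (simp_all add: P_def coeff_mult_0 numeral_eq_Suc algebra_simps)

lemma sgn_mult_cnj_sgn: "w \<noteq> 0 \<Longrightarrow> sgn w * cnj (sgn w) = 1" for w :: complex
  by (simp add: norm_sgn flip: complex_norm_square)

lemma unit_hopf_columns:
  fixes z1 z2 z3 z4 :: complex
  defines "p \<equiv> \<lambda>i. [z1, z2, z3, z4] ! i"
  shows "(\<Prod>j\<in>{0..<4} - {0}. unit_hopf_poly p 0 j) =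
      [:1, cnj (sgn (z2 - z1)):] * ([:1, cnj (sgn (z3 - z1)):] * [:1, cnj (sgn (z4 - z1)):])"
    and "(\<Prod>j\<in>{0..<4} - {1}. unit_hopf_poly p 1 j) =
      [:sgn (z1 - z2), 1:] * ([:1, cnj (sgn (z3 - z2)):] * [:1, cnj (sgn (z4 - z2)):])"
    and "(\<Prod>j\<in>{0..<4} - {2}. unit_hopf_poly p 2 j) =
      [:sgn (z1 - z3), 1:] * ([:sgn (z2 - z3), 1:] * [:1, cnj (sgn (z4 - z3)):])"
    and "(\<Prod>j\<in>{0..<4} - {3}. unit_hopf_poly p 3 j) =
      [:sgn (z1 - z4), 1:] * ([:sgn (z2 - z4), 1:] * [:sgn (z3 - z4), 1:])"
  by (simp_all add: atLeast0LessThan_4 insert_Diff_if unit_hopf_poly_def p_def)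

lemma unit_hopf_det_eq_atiyah_angle_sum:
  fixes z1 z2 z3 z4 :: complex
  assumes "distinct [z1, z2, z3, z4]"
  defines "v \<equiv> vtx z1 z2 z3 z4"
  defines "\<rho> \<equiv> \<lambda>j a b. sgn (v (j + b) - v j) * cnj (sgn (v (j + a) - v j))"
  shows "unit_hopf_det z1 z2 z3 z4 =
    of_real (atiyah_angle_sum (\<lambda>j. Re (\<rho> j 1 2)) (\<lambda>j. Re (\<rho> j 2 3)) (\<lambda>j. Re (\<rho> j 1 3))
      (\<lambda>j. Im (\<rho> j 1 2)) (\<lambda>j. Im (\<rho> j 2 3)) (\<lambda>j. Im (\<rho> j 1 3)))"
proof -
  \<comment> \<open>Groebner bases cannot divide by 2, so \<open>1 / 2\<close> enters as an opaque \<open>h\<close> with \<open>2 * h = 1\<close>.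
    The method is called by its qualified name because HOL-Algebra also has an \<open>algebra\<close>.\<close>
  define h :: complex where "h = 1 / 2"
  have Re_eq: "complex_of_real (Re w) = (w + cnj w) * h" for w
    by (simp add: h_def complex_add_cnj)
  have Im_eq: "complex_of_real (Im w) = (cnj w - w) * \<i> * h" for w
    by (simp add: h_def complex_eq_iff)
  have swap: "sgn (z1 - z2) = - sgn (z2 - z1)" "sgn (z1 - z3) = - sgn (z3 - z1)"
    "sgn (z1 - z4) = - sgn (z4 - z1)" "sgn (z2 - z3) = - sgn (z3 - z2)"
    "sgn (z2 - z4) = - sgn (z4 - z2)" "sgn (z3 - z4) = - sgn (z4 - z3)"
    by (simp_all flip: sgn_minus)
  have units: "sgn (z2 - z1) * cnj (sgn (z2 - z1)) = 1" "sgn (z3 - z1) * cnj (sgn (z3 - z1)) = 1"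
    "sgn (z4 - z1) * cnj (sgn (z4 - z1)) = 1" "sgn (z3 - z2) * cnj (sgn (z3 - z2)) = 1"
    "sgn (z4 - z2) * cnj (sgn (z4 - z2)) = 1" "sgn (z4 - z3) * cnj (sgn (z4 - z3)) = 1"
    using assms(1) by (auto intro: sgn_mult_cnj_sgn)
  have hi: "2 * h = 1" "\<i> * \<i> = -1"
    by (simp_all add: h_def)
  have v: "v 1 = z1" "v 2 = z2" "v 3 = z3" "v 4 = z4" "v 5 = z1" "v 6 = z2" "v 7 = z3"
    "v 8 = z4" "v 9 = z1" "v 10 = z2"
    by (simp_all add: v_def vtx_def)
  have I4: "{1..4::int} = {1, 2, 3, 4}" by auto
  show ?thesis
    unfolding of_real_atiyah_angle_sum Re_eq Im_eq
    unfolding unit_hopf_det_def Let_def det_mat_4 atiyah_angle_sum_def \<rho>_def I4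
    apply (simp only: prod.case unit_hopf_columns coeff_linear_prod3)
    apply (simp add: v swap)
    using units hi by Groebner_Basis.algebra
qed

theorem theorem1:
  fixes z1 z2 z3 z4 :: complex
  defines "v \<equiv> vtx z1 z2 z3 z4"
  defines "r \<equiv> (\<lambda>j k. cmod (v k - v j))"
  defines "\<alpha> \<equiv> (\<lambda>j. uangle (v (j+1)) (v j) (v (j+2)))"
  defines "\<beta> \<equiv> (\<lambda>j. uangle (v (j+2)) (v j) (v (j-1)))"
  defines "\<gamma> \<equiv> (\<lambda>j. uangle (v (j-1)) (v j) (v (j+1)))"
  defines "S1 \<equiv> (\<Sum>j=1..4. cos (\<alpha> j) + cos (\<beta> j) + cos (\<gamma> j))"
  defines "S2 \<equiv> (\<Sum>j=1..4. (cos (\<alpha> j) + cos (\<beta> j) + cos (\<gamma> j)) *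
                           (cos (\<alpha> (j+1)) + cos (\<gamma> (j+2)) + cos (\<beta> (j+3))))"
  defines "E \<equiv> 2 * (\<Sum>j=1..4. sin (\<alpha> j) * sin (\<alpha> (j+1)) + sin (\<beta> j) * sin (\<beta> (j+1))
                   - sin (\<gamma> j) * sin (\<alpha> (j+1)) - sin (\<gamma> (j+1)) * sin (\<beta> j)
                   + sin (\<gamma> j) * sin (\<alpha> (j+2)) + sin (\<gamma> j) * sin (\<beta> (j+2)))
              - 4 * (\<Sum>j=1..4. sin (\<alpha> (j+1)) * sin (\<beta> j))
              + 4 * sin (\<gamma> 1) * sin (\<gamma> 3) + 4 * sin (\<gamma> 2) * sin (\<gamma> 4)"
  assumes "convex_quad z1 z2 z3 z4"
  shows "Atiyah z1 z2 z3 z4 =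
    complex_of_real (r 1 2 * r 1 3 * r 1 4 * r 2 3 * r 2 4 * r 3 4 * (24 + 8 * S1 + 2 * S2 + E))"
proof -
  define \<rho> where "\<rho> j a b = sgn (v (j + b) - v j) * cnj (sgn (v (j + a) - v j))" for j a b
  obtain t :: real where t: "t * t = 1"
    and rot: "\<And>j a b. (a, b) \<in> {(1, 2), (1, 3), (2, 3)} \<Longrightarrow>
      \<rho> j a b = Complex (cos (uangle (v (j + a)) (v j) (v (j + b))))
        (t * sin (uangle (v (j + a)) (v j) (v (j + b))))"
    using convex_quad_rotations[OF \<open>convex_quad z1 z2 z3 z4\<close>] unfolding \<rho>_def v_def by blast
  have "v (j - 1) = v (j + 3)" for j
    using vtx_add_4[of z1 z2 z3 z4 "j - 1"] by (simp add: v_def add.commute)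
  then have "\<rho> j 1 2 = Complex (cos (\<alpha> j)) (t * sin (\<alpha> j))"
    "\<rho> j 2 3 = Complex (cos (\<beta> j)) (t * sin (\<beta> j))"
    "\<rho> j 1 3 = Complex (cos (\<gamma> j)) (t * sin (\<gamma> j))" for j
    using rot[of 1 2 j] rot[of 2 3 j] rot[of 1 3 j]
    by (simp_all add: \<alpha>_def \<beta>_def \<gamma>_def uangle_commute)
  then have angles:
    "cos (\<alpha> j) = Re (\<rho> j 1 2)" "cos (\<beta> j) = Re (\<rho> j 2 3)" "cos (\<gamma> j) = Re (\<rho> j 1 3)"
    "sin (\<alpha> j) = t * Im (\<rho> j 1 2)" "sin (\<beta> j) = t * Im (\<rho> j 2 3)"
    "sin (\<gamma> j) = t * Im (\<rho> j 1 3)" for j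
    using t by (simp_all add: mult.assoc[symmetric])
  have "24 + 8 * S1 + 2 * S2 + E =
      atiyah_angle_sum (\<lambda>j. cos (\<alpha> j)) (\<lambda>j. cos (\<beta> j)) (\<lambda>j. cos (\<gamma> j))
        (\<lambda>j. sin (\<alpha> j)) (\<lambda>j. sin (\<beta> j)) (\<lambda>j. sin (\<gamma> j))"
    by (simp add: atiyah_angle_sum_def S1_def S2_def E_def)
  also have "\<dots> = atiyah_angle_sum (\<lambda>j. Re (\<rho> j 1 2)) (\<lambda>j. Re (\<rho> j 2 3)) (\<lambda>j. Re (\<rho> j 1 3))
      (\<lambda>j. Im (\<rho> j 1 2)) (\<lambda>j. Im (\<rho> j 2 3)) (\<lambda>j. Im (\<rho> j 1 3))"
    unfolding angles by (rule atiyah_angle_sum_scale_sines[OF t])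
  finally show ?thesis
    using Atiyah_eq_mult_unit_hopf_det[of z1 z2 z3 z4]
      unit_hopf_det_eq_atiyah_angle_sum[OF convex_quad_distinct[OF \<open>convex_quad z1 z2 z3 z4\<close>]]
    by (simp add: r_def v_def \<rho>_def vtx_def)
qed

end
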